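(* In the setting described in the context, for every $y\in\mathbb R^p$ and $n\ge1$, $$\widetilde a_{n+1}(y)+2\tau_n\widetilde J(x_n,w_n,y)\le\widetilde a_n(y)-b_n,$$ where $\widetilde J(x,w,y)=F(x,w)+\langle y,H(x)-w\rangle-F(x^\star,w^\star)$, $\widetilde a_n(y)=\frac{\psi}{\psi-1}\|z_{n+1}-x^\star\|^2+\frac1\beta\|y_{n-1}-y\|^2+\omega\delta_{n-1}\|x_n-x_{n-1}\|^2$, and $b_n=-\frac{\tau_n\tau_{n-1}}{\xi}\|\theta_n\|^2+\frac1\beta\|y_n-y_{n-1}\|^2+\omega\delta_{n-1}\|x_n-x_{n-1}\|^2-2\tau_n\Phi_n^y$.
   Context: Let $f:\mathbb{R}^p\to(-\infty,+\infty]$ and $g:\mathbb{R}^q\to(-\infty,+\infty]$ be proper closed convex functions; $f^*$ is the Fenchel conjugate, $\mathrm{dom}$ the effective domain, $\mathrm{Prox}_{\lambda h}(x)=\arg\min_u\{h(u)+\frac{1}{2\lambda}\|u-x\|^2\}$. Let $h:\mathbb R^q\to\mathbb R$ be convex with $L_h$-Lipschitz gradient, and $H:\mathrm{dom}(g)\to\mathrm{dom}(f)$ continuously differentiable with Jacobian $H'$, such that $x\mapsto\langle H(x),y\rangle$ is convex for every $y\in\mathrm{dom}(f^* )$. Set $\Phi(x,y)=h(x)+\langle H(x),y\rangle$ and $\mathcal L(x,y)=g(x)+\Phi(x,y)-f^*(y)$. Assume: (A1) the set of saddle points $\{(x^\star,y^\star)\in\mathrm{dom}(g)\times\mathrm{dom}(f^*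 ):-\nabla_x\Phi(x^\star,y^\star)\in\partial g(x^\star),\ \nabla_y\Phi(x^\star,y^\star)\in\partial f^*(y^\star)\}$ is nonempty, $\mathrm{dom}(g)\times\mathrm{dom}(f^* )\subseteq\mathrm{dom}(\Phi)$, $\mathcal L(x^\star,y^\star)$ finite; (A2) $\Phi(\cdot,y)$ convex differentiable, $\Phi(x,\cdot)$ concave differentiable, and on every pair of bounded sets $\mathcal X,\mathcal Y$ there are $L_{yy},L_{xx}\ge0,L_{xy}>0$ with $\|\nabla_y\Phi(x,y)-\nabla_y\Phi(x,\tilde y)\|\le L_{yy}\|y-\tilde y\|$, $\|\nabla_x\Phi(x,y)-\nabla_x\Phi(\tilde x,\tilde y)\|\le L_{xx}\|x-\tilde x\|+L_{xy}\|y-\tilde y\|$ on $(\mathcal X\cap\mathrm{dom}(g))\times(\mathcal Y\cap\mathrm{dom}(f^* ))$. Let $F(x,w)=g(x)+h(x)+f(w)$, and let $(x^\star,w^\star,y^\star)$ be a fixed point of $\widetilde\Omega=\{(x,w,y)\in\mathrm{dom}(g)\times\mathrm{dom}(f)\times\mathrm{dom}(f^* ): -H'(x)^\top y-\nabla h(x)\in\partial g(x),\ y\in\partial f(w),\ H(x)=w\}$. Algorithm PDAc-L (applied to this $\Phi$): choose $\psi\in(1,1+\sqrt3)$, $\xi>0$, $\varphi>1$ with $\omega:=2\psi-\xi-\frac{\psi^3\varphi}{1+\psi}>0$, $\tau_{\max}>0$, $\nu,\mu\in(0,1)$, $\eta\in[0,1)$, integer $M\ge1$, $\beta>0$, $x_0\in\mathrm{dom}(g)$,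 $y_0\in\mathrm{dom}(f^* )$, $\tau_0\in(0,\tau_{\max}]$; $z_0=x_0$, $\delta_0=1$. For $n\ge1$: $z_n=\frac{\psi-1}{\psi}x_{n-1}+\frac1\psi z_{n-1}$, $x_n=\mathrm{Prox}_{\tau_{n-1}g}(z_n-\tau_{n-1}\nabla_x\Phi(x_{n-1},y_{n-1}))$; with $\tau=\min\{\varphi\tau_{n-1},\tau_{\max}\}$, set $\tau_n=\tau\mu^i$, $y_n=\mathrm{Prox}_{\beta\tau_nf^*}(y_{n-1}+\beta\tau_nH(x_n))$, where $i\ge0$ is the smallest integer with $\frac{\tau_n\tau_{n-1}}{\xi}\|\theta_n\|^2+2\tau_n\Phi_n^y\le\nu r_n+(1-\nu)c_n$, $\theta_n=\nabla_x\Phi(x_n,y_n)-\nabla_x\Phi(x_{n-1},y_{n-1})$, $\Phi_n^y=\Phi(x_n,y_{n-1})+\langle\nabla_y\Phi(x_n,y_{n-1}),y_n-y_{n-1}\rangle-\Phi(x_n,y_n)$ (here $=0$), $r_n=\omega\delta_{n-1}\|x_n-x_{n-1}\|^2+\frac1\beta\|y_n-y_{n-1}\|^2$, $c_n=\frac{\eta}{|\mathcal I_n|}\sum_{i\in\mathcal I_n}r_i$, $\mathcal I_n=\{n-1,\dots,\max\{n-M,1\}\}$ ($c_1:=0$); $\delta_n=\tau_n/\tau_{n-1}$. Define $w_n=\mathrm{Prox}_{f/(\beta\tau_n)}(y_{n-1}/(\beta\tau_n)+H(x_n))$, so that $y_n=y_{n-1}+\beta\tau_n(H(x_n)-w_n)$.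 *)

theory Defs
  imports "HOL-Analysis.Analysis" "HOL-Library.Extended_Real"
begin

definition edom :: "('a \<Rightarrow> ereal) \<Rightarrow> 'a set" where
  "edom f = {x. f x < \<infinity>}"

definition epi :: "('a \<Rightarrow> ereal) \<Rightarrow> ('a \<times> real) set" where
  "epi f = {(x, r). f x \<le> ereal r}"

text \<open>proper, closed (lower semicontinuous = closed epigraph), convex (convex epigraph)\<close>
definition proper_closed_convex :: "('a::real_normed_vector \<Rightarrow> ereal) \<Rightarrow> bool" where
  "proper_closed_convex f \<longleftrightarrow>
     convex (epi f) \<and> closed (epi f) \<and> (\<forall>x. f x \<noteq> -\<infinity>) \<and> (\<exists>x. f x \<noteq> \<infinity>)"

definition fconj :: "('a::real_inner \<Rightarrow> ereal) \<Rightarrow> 'a \<Rightarrow> ereal" where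
  "fconj f y = (SUP x. ereal (x \<bullet> y) - f x)"

definition subdiff :: "('a::real_inner \<Rightarrow> ereal) \<Rightarrow> 'a \<Rightarrow> 'a set" where
  "subdiff f x = {v. \<forall>u. f x + ereal (v \<bullet> (u - x)) \<le> f u}"

definition Prox :: "real \<Rightarrow> ('a::real_normed_vector \<Rightarrow> ereal) \<Rightarrow> 'a \<Rightarrow> 'a set" where
  "Prox lam h x = {u. \<forall>v. h u + ereal (norm (u - x)^2 / (2 * lam))
                          \<le> h v + ereal (norm (v - x)^2 / (2 * lam))}"

definition Phi :: "('a \<Rightarrow> real) \<Rightarrow> ('a \<Rightarrow> 'b::real_inner) \<Rightarrow> 'a \<Rightarrow> 'b \<Rightarrow> real" where
  "Phi h H x y = h x + H x \<bullet> y"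

definition gradxPhi :: "('a::real_inner \<Rightarrow> 'a) \<Rightarrow> ('a \<Rightarrow> 'a \<Rightarrow>\<^sub>L 'b::real_inner) \<Rightarrow> 'a \<Rightarrow> 'b \<Rightarrow> 'a" where
  "gradxPhi gh H' x y = gh x + adjoint (blinfun_apply (H' x)) y"

definition delta :: "(nat \<Rightarrow> real) \<Rightarrow> nat \<Rightarrow> real" where
  "delta tau n = (if n = 0 then 1 else tau n / tau (n - 1))"

definition rseq :: "real \<Rightarrow> real \<Rightarrow> (nat \<Rightarrow> real) \<Rightarrow> (nat \<Rightarrow> 'a::real_normed_vector)
                      \<Rightarrow> (nat \<Rightarrow> 'b::real_normed_vector) \<Rightarrow> nat \<Rightarrow> real" where
  "rseq \<omega> \<beta> tau x y i = \<omega> * delta tau (i - 1) * norm (x i - x (i - 1))^2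
                           + 1 / \<beta> * norm (y i - y (i - 1))^2"

definition Iset :: "nat \<Rightarrow> nat \<Rightarrow> nat set" where
  "Iset M n = {max (n - M) 1 .. n - 1}"

definition cseq :: "real \<Rightarrow> nat \<Rightarrow> real \<Rightarrow> real \<Rightarrow> (nat \<Rightarrow> real) \<Rightarrow> (nat \<Rightarrow> 'a::real_normed_vector)
                      \<Rightarrow> (nat \<Rightarrow> 'b::real_normed_vector) \<Rightarrow> nat \<Rightarrow> real" where
  "cseq \<eta> M \<omega> \<beta> tau x y n =
     (if n = 1 then 0
      else \<eta> / real (card (Iset M n)) * (\<Sum>i\<in>Iset M n. rseq \<omega> \<beta> tau x y i))"

definition ls_cond ::
  "('a::real_inner \<Rightarrow> real) \<Rightarrow> ('a \<Rightarrow> 'a) \<Rightarrow> ('a \<Rightarrow> 'b::real_inner) \<Rightarrow> ('a \<Rightarrow> 'a \<Rightarrow>\<^sub>L 'b)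
    \<Rightarrow> real \<Rightarrow> real \<Rightarrow> real \<Rightarrow> real \<Rightarrow> real \<Rightarrow> nat
    \<Rightarrow> (nat \<Rightarrow> real) \<Rightarrow> (nat \<Rightarrow> 'a) \<Rightarrow> (nat \<Rightarrow> 'b) \<Rightarrow> nat \<Rightarrow> real \<Rightarrow> 'b \<Rightarrow> bool" where
  "ls_cond h gh H H' \<xi> \<nu> \<eta> \<omega> \<beta> M tau x y n t yt \<longleftrightarrow>
     (let \<theta> = gradxPhi gh H' (x n) yt - gradxPhi gh H' (x (n - 1)) (y (n - 1));
          Phiy = Phi h H (x n) (y (n - 1)) + H (x n) \<bullet> (yt - y (n - 1)) - Phi h H (x n) yt;
          r = \<omega> * delta tau (n - 1) * norm (x n - x (n - 1))^2 + 1 / \<beta> * norm (yt - y (n - 1))^2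
      in t * tau (n - 1) / \<xi> * norm \<theta>^2 + 2 * t * Phiy
           \<le> \<nu> * r + (1 - \<nu>) * cseq \<eta> M \<omega> \<beta> tau x y n)"

end

theory Submission
  imports Defs
begin

(* The g- and Phi-terms are bounded by adding the
   subgradient inequalities of g at the consecutive proximal points x_n and x_{n+1} to the
   gradient inequality of the convex function Phi(., y_n). The inner products this produces
   become differences of squares through the averaging step z_{n+1} = ((psi - 1) x_n + z_n) / psi;
   the leftover quadratic term in x_{n+1} - x_n is absorbed using delta_n <= phi (which is where
   omega comes from), and the gradient mismatch theta_n costs a Young term. For the f-terms,
   Moreau's decomposition gives y_n = y_{n-1} + beta tau_n (H x_n - w_n) with y_n a subgradient
   of f at w_n, so they telescope into squared distances of the dual iterates. *)

lemma le_if_forall_le_add_scaled: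
  fixes a b C :: real
  assumes "\<And>t. 0 < t \<Longrightarrow> t \<le> 1 \<Longrightarrow> a \<le> b + t * C"
  shows "a \<le> b"
proof (rule tendsto_lowerbound)
  have "((\<lambda>t. b + t * C) \<longlongrightarrow> b + 0 * C) (at_right 0)"
    by (intro tendsto_intros)
  then show "((\<lambda>t. b + t * C) \<longlongrightarrow> b) (at_right 0)"
    by simp
  show "\<forall>\<^sub>F t in at_right 0. a \<le> b + t * C"
    unfolding eventually_at_right_field using assms by (intro exI[of _ 1]) auto
qed simp

lemma norm_diff_power2:
  fixes a b :: "'a::real_inner"
  shows "norm (a - b)^2 = norm a ^ 2 - 2 * (a \<bullet> b) + norm b ^ 2"
  by (simp add: power2_norm_eq_inner inner_diff_left inner_diff_right inner_commute)

lemma inner_three_point: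
  fixes a b c :: "'a::real_inner"
  shows "2 * ((c - b) \<bullet> (b - a)) = norm (a - c)^2 - norm (b - c)^2 - norm (b - a)^2"
  unfolding power2_norm_eq_inner by (simp add: inner_diff_left inner_diff_right inner_commute)

lemma inner_le_young:
  fixes a b :: "'a::real_inner"
  assumes "e > 0"
  shows "2 * (a \<bullet> b) \<le> e * norm a ^ 2 + norm b ^ 2 / e"
proof -
  have "0 \<le> norm (e *\<^sub>R a - b)^2 / e"
    using assms by simp
  also have "\<dots> = e * norm a ^ 2 - 2 * (a \<bullet> b) + norm b ^ 2 / e"
    unfolding norm_diff_power2 using assms by (simp add: field_simps power2_eq_square)
  finally show ?thesis
    by simp
qed

lemma norm_convex_combination_power2:
  fixes a b :: "'a::real_inner"
  shows "norm ((1 - s) *\<^sub>R a + s *\<^sub>R b)^2 = (1 - s) * norm a ^ 2 + s * norm b ^ 2 - s * (1 - s) * norm (a - b)^2"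
  unfolding power2_norm_eq_inner
  by (simp add: inner_add_left inner_add_right inner_diff_left inner_diff_right inner_commute algebra_simps)

lemma inner_relaxation_identity:
  fixes a b :: "'a::real_inner"
  assumes "\<psi> > 1"
  shows "2 * ((b - a) \<bullet> a) = \<psi> / (\<psi> - 1) * norm b ^ 2
     - \<psi> / (\<psi> - 1) * norm (((\<psi> - 1) / \<psi>) *\<^sub>R a + (1 / \<psi>) *\<^sub>R b) ^ 2
     - (\<psi> + 1) / \<psi> * norm (a - b) ^ 2"
proof -
  have "(\<psi> - 1) / \<psi> = 1 - 1 / \<psi>"
    using assms by (simp add: field_simps)
  then have comb: "norm (((\<psi> - 1) / \<psi>) *\<^sub>R a + (1 / \<psi>) *\<^sub>R b) ^ 2
      = (1 - 1 / \<psi>) * norm a ^ 2 + 1 / \<psi> * norm b ^ 2 - 1 / \<psi> * (1 - 1 / \<psi>) * norm (a - b)^2"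
    by (simp only: norm_convex_combination_power2)
  have inner: "2 * ((b - a) \<bullet> a) = norm b ^ 2 - norm a ^ 2 - norm (a - b) ^ 2"
    unfolding power2_norm_eq_inner by (simp add: inner_diff_left inner_diff_right inner_commute)
  have "\<psi> / (\<psi> - 1) * (1 - 1 / \<psi>) = 1" "(\<psi> + 1) / \<psi> = 1 + 1 / \<psi>"
    using assms by (simp_all add: field_simps)
  then show ?thesis
    unfolding comb inner by algebra
qed

lemma inner_quadratic_bound:
  fixes a b :: "'a::real_inner"
  assumes "P > 0"
  shows "(2 * \<psi> - P) * norm (a - b)^2 + 2 * \<psi> * (b \<bullet> (a - b)) \<le> \<psi>^2 / P * norm a ^ 2"
proof -
  have "\<psi>^2 / P * norm a ^ 2 - ((2 * \<psi> - P) * norm (a - b)^2 + 2 * \<psi> * (b \<bullet> (a - b)))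
      = norm ((\<psi> - P) *\<^sub>R a + P *\<^sub>R b)^2 / P"
    using assms unfolding power2_norm_eq_inner
    by (simp add: inner_add_left inner_add_right inner_diff_left inner_diff_right inner_commute
        field_simps power2_eq_square)
  also have "\<dots> \<ge> 0"
    using assms by simp
  finally show ?thesis
    by simp
qed

lemma proper_closed_convex_finite:
  assumes "proper_closed_convex f" "x \<in> edom f"
  obtains r where "f x = ereal r"
  using assms by (cases "f x") (auto simp: proper_closed_convex_def edom_def)

lemma proper_closed_convex_onD:
  assumes "proper_closed_convex f" "f u = ereal a" "f v = ereal b" "0 \<le> t" "t \<le> 1"
  shows "f ((1 - t) *\<^sub>R u + t *\<^sub>R v) \<le> ereal ((1 - t) * a + t * b)"
proof -
  have "(u, a) \<in> epi f" "(v, b) \<in> epi f"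
    using assms(2,3) by (auto simp: epi_def)
  with assms(1,4,5) have "(1 - t) *\<^sub>R (u, a) + t *\<^sub>R (v, b) \<in> epi f"
    by (intro convexD_alt) (auto simp: proper_closed_convex_def)
  then show ?thesis
    by (simp add: epi_def)
qed

lemma Prox_in_edom:
  assumes "proper_closed_convex f" "u \<in> Prox lam f d"
  shows "u \<in> edom f"
proof -
  obtain x where "f x \<noteq> \<infinity>"
    using assms(1) by (auto simp: proper_closed_convex_def)
  moreover have "f u + ereal (norm (u - d)^2 / (2 * lam)) \<le> f x + ereal (norm (x - d)^2 / (2 * lam))"
    using assms(2) by (simp add: Prox_def)
  ultimately show ?thesis
    by (auto simp: edom_def top.extremum_unique less_top)
qed

lemma Prox_imp_subdiff:
  fixes f :: "'a::real_inner \<Rightarrow> ereal"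
  assumes f: "proper_closed_convex f" and lam: "lam > 0" and u: "u \<in> Prox lam f d"
  shows "(1 / lam) *\<^sub>R (d - u) \<in> subdiff f u"
  unfolding subdiff_def
proof (intro CollectI allI)
  fix v
  obtain a where a: "f u = ereal a"
    using proper_closed_convex_finite[OF f Prox_in_edom[OF f u]] .
  show "f u + ereal (((1 / lam) *\<^sub>R (d - u)) \<bullet> (v - u)) \<le> f v"
  proof (cases "f v")
    case (real b)
    define q where "q = (d - u) \<bullet> (v - u) / lam"
    define C where "C = norm (v - u)^2 / (2 * lam)"
    have "a \<le> b - q + t * C" if t: "0 < t" "t \<le> 1" for t
    proof -
      define ut where "ut = (1 - t) *\<^sub>R u + t *\<^sub>R v"
      have "f u + ereal (norm (u - d)^2 / (2 * lam)) \<le> f ut + ereal (norm (ut - d)^2 / (2 * lam))"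
        using u by (simp add: Prox_def)
      also have "\<dots> \<le> ereal ((1 - t) * a + t * b) + ereal (norm (ut - d)^2 / (2 * lam))"
        using proper_closed_convex_onD[OF f a real] t by (intro add_right_mono) (simp add: ut_def)
      finally have "a + norm (u - d)^2 / (2 * lam) \<le> (1 - t) * a + t * b + norm (ut - d)^2 / (2 * lam)"
        using a by simp
      moreover have "norm (ut - d)^2 = norm (u - d)^2 - 2 * t * ((d - u) \<bullet> (v - u)) + t^2 * norm (v - u)^2"
        unfolding ut_def power2_norm_eq_inner
        by (simp add: algebra_simps inner_commute power2_eq_square)
      then have "norm (ut - d)^2 / (2 * lam) = norm (u - d)^2 / (2 * lam) - t * q + t * (t * C)"
        using lam by (simp add: q_def C_def field_simps power2_eq_square)
      ultimately have "t * a \<le> t * (b - q + t * C)"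
        by (simp add: algebra_simps)
      then show ?thesis
        using t by simp
    qed
    then have "a \<le> b - q"
      by (rule le_if_forall_le_add_scaled)
    then show ?thesis
      using a real lam by (simp add: q_def)
  qed (use f in \<open>auto simp: proper_closed_convex_def\<close>)
qed

lemma fenchel_young: "ereal (w \<bullet> v) - f w \<le> fconj f v"
  unfolding fconj_def by (rule SUP_upper) simp

lemma fconj_eq_if_subdiff:
  assumes v: "v \<in> subdiff f w" and r: "f w = ereal r"
  shows "fconj f v = ereal (w \<bullet> v - r)"
proof (rule antisym)
  show "fconj f v \<le> ereal (w \<bullet> v - r)"
    unfolding fconj_def
  proof (rule SUP_least)
    fix x
    have "f w + ereal (v \<bullet> (x - w)) \<le> f x"
      using v by (simp add: subdiff_def)
    then show "ereal (x \<bullet> v) - f x \<le> ereal (w \<bullet> v - r)"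
      using r by (cases "f x") (auto simp: inner_diff_right inner_commute)
  qed
  show "ereal (w \<bullet> v - r) \<le> fconj f v"
    using fenchel_young[of w v f] r by simp
qed

lemma subdiff_ereal_ineq:
  assumes "v \<in> subdiff f x" "f x = ereal a" "f y = ereal b"
  shows "a + v \<bullet> (y - x) \<le> b"
  using assms by (auto simp: subdiff_def dest: spec[of _ y])

lemma Prox_fconj_eq:
  fixes f :: "'a::real_inner \<Rightarrow> ereal"
  assumes f: "proper_closed_convex f" and lam: "lam > 0"
    and w: "w \<in> Prox (1 / lam) f ((1 / lam) *\<^sub>R y0 + c)"
    and y: "y \<in> Prox lam (fconj f) (y0 + lam *\<^sub>R c)"
  shows "y = y0 + lam *\<^sub>R (c - w)" and "y \<in> subdiff f w"
proof -
  define yw where "yw = y0 + lam *\<^sub>R (c - w)"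
  define C where "C = y0 + lam *\<^sub>R c"
  obtain r where r: "f w = ereal r"
    using proper_closed_convex_finite[OF f Prox_in_edom[OF f w]] .
  have "(1 / (1 / lam)) *\<^sub>R ((1 / lam) *\<^sub>R y0 + c - w) \<in> subdiff f w"
    using lam by (intro Prox_imp_subdiff[OF f _ w]) simp
  then have yw_subdiff: "yw \<in> subdiff f w"
    using lam by (simp add: yw_def algebra_simps)
  \<comment> \<open>By Fenchel-Young the prox objective of fconj f dominates the strictly convex quadratic
      u \<mapsto> w \<bullet> u - r + norm (u - C)^2 / (2 lam) and equals it at the quadratic's minimiser yw;
      hence the minimiser y of the prox objective is yw.\<close>
  have square: "w \<bullet> u + norm (u - C)^2 / (2 * lam)
      = w \<bullet> yw + norm (yw - C)^2 / (2 * lam) + norm (u - yw)^2 / (2 * lam)" for u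
  proof -
    have "u - C = (u - yw) - lam *\<^sub>R w" "yw - C = - (lam *\<^sub>R w)"
      by (simp_all add: yw_def C_def algebra_simps)
    then have "norm (u - C)^2 = norm (u - yw)^2 - 2 * lam * ((u - yw) \<bullet> w) + norm (yw - C)^2"
      by (simp only: norm_diff_power2 norm_minus_cancel inner_scaleR_right mult.assoc)
    moreover have "w \<bullet> u = w \<bullet> yw + (u - yw) \<bullet> w"
      by (simp add: inner_simps inner_commute)
    ultimately show ?thesis
      using lam by (simp add: add_divide_distrib diff_divide_distrib)
  qed
  have "ereal (w \<bullet> y) - f w + ereal (norm (y - C)^2 / (2 * lam))
      \<le> fconj f y + ereal (norm (y - C)^2 / (2 * lam))"
    by (intro add_right_mono fenchel_young)
  also have "\<dots> \<le> fconj f yw + ereal (norm (yw - C)^2 / (2 * lam))"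
    using y by (simp add: Prox_def C_def)
  also have "\<dots> = ereal (w \<bullet> yw - r + norm (yw - C)^2 / (2 * lam))"
    using fconj_eq_if_subdiff[OF yw_subdiff r] by simp
  finally have "w \<bullet> y + norm (y - C)^2 / (2 * lam) \<le> w \<bullet> yw + norm (yw - C)^2 / (2 * lam)"
    using r by simp
  then have "norm (y - yw)^2 / (2 * lam) \<le> 0"
    using square[of y] by linarith
  then have "y = yw"
    using lam by (simp add: divide_le_0_iff)
  then show "y = y0 + lam *\<^sub>R (c - w)" and "y \<in> subdiff f w"
    using yw_subdiff by (simp_all add: yw_def)
qed

lemma subdiff_imp_edom_fconj:
  assumes "v \<in> subdiff f w" "f w = ereal r"
  shows "v \<in> edom (fconj f)"
  using fconj_eq_if_subdiff[OF assms] by (simp add: edom_def)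

lemma convex_on_has_derivative_ge:
  fixes \<phi> :: "'a::real_normed_vector \<Rightarrow> real"
  assumes cvx: "convex_on S \<phi>" and D: "(\<phi> has_derivative D) (at u within S)"
    and u: "u \<in> S" and v: "v \<in> S"
  shows "\<phi> u + D (v - u) \<le> \<phi> v"
proof -
  define \<gamma> where "\<gamma> t = (1 - t) *\<^sub>R u + t *\<^sub>R v" for t :: real
  have \<gamma>_S: "\<gamma> ` {0..1} \<subseteq> S"
    using cvx u v by (auto simp: \<gamma>_def convex_on_def intro: convexD_alt)
  have "(\<gamma> has_derivative (\<lambda>t. t *\<^sub>R (v - u))) (at 0 within {0..1})"
    unfolding \<gamma>_def by (auto intro!: derivative_eq_intros simp: algebra_simps)
  moreover have "(\<phi> has_derivative D) (at (\<gamma> 0) within \<gamma> ` {0..1})"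
    using has_derivative_subset[OF D \<gamma>_S] by (simp add: \<gamma>_def)
  ultimately have "(\<phi> \<circ> \<gamma> has_derivative (\<lambda>t. t * D (v - u))) (at 0 within {0..1})"
    using linear_cmul[OF has_derivative_linear[OF D]] by (auto dest: diff_chain_within simp: o_def)
  then have "(\<phi> \<circ> \<gamma> has_field_derivative D (v - u)) (at_right 0)"
    by (intro has_derivative_imp_has_field_derivative) (auto simp: at_within_Icc_at_right)
  then have "((\<lambda>t. (\<phi> (\<gamma> t) - \<phi> u) / t) \<longlongrightarrow> D (v - u)) (at_right 0)"
    by (simp add: has_field_derivative_iff \<gamma>_def)
  moreover have "\<forall>\<^sub>F t in at_right 0. (\<phi> (\<gamma> t) - \<phi> u) / t \<le> \<phi> v - \<phi> u"
    unfolding eventually_at_right_field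
  proof (intro exI[of _ 1] conjI allI impI)
    fix t :: real
    assume "0 < t" "t < 1"
    then have "\<phi> (\<gamma> t) \<le> (1 - t) * \<phi> u + t * \<phi> v"
      using cvx u v by (simp add: \<gamma>_def convex_onD)
    then show "(\<phi> (\<gamma> t) - \<phi> u) / t \<le> \<phi> v - \<phi> u"
      using \<open>0 < t\<close> by (simp only: pos_divide_le_eq) (simp add: algebra_simps)
  qed simp
  ultimately have "D (v - u) \<le> \<phi> v - \<phi> u"
    by (intro tendsto_upperbound) auto
  then show ?thesis
    by simp
qed

lemma Phi_has_derivative:
  fixes H :: "'a::euclidean_space \<Rightarrow> 'b::euclidean_space"
  assumes "(h has_derivative (\<lambda>d. gh u \<bullet> d)) (at u)"
    and "(H has_derivative blinfun_apply (H' u)) (at u within S)"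
  shows "((\<lambda>u. Phi h H u v) has_derivative (\<lambda>d. gradxPhi gh H' u v \<bullet> d)) (at u within S)"
proof -
  have "((\<lambda>u. Phi h H u v) has_derivative (\<lambda>d. gh u \<bullet> d + H' u d \<bullet> v)) (at u within S)"
    unfolding Phi_def
    using has_derivative_add[OF has_derivative_at_withinI[OF assms(1)] has_derivative_inner_left[OF assms(2)]] .
  moreover have "d \<bullet> adjoint (blinfun_apply (H' u)) v = H' u d \<bullet> v" for d
    by (rule adjoint_works[OF bounded_linear.linear[OF blinfun.bounded_linear_right]])
  ultimately show ?thesis
    by (simp add: gradxPhi_def inner_add_right inner_commute)
qed

lemma backtracking_step_size:
  fixes \<tau> :: "nat \<Rightarrow> real"
  assumes \<tau>0: "\<tau> 0 > 0" and pos: "\<phi> > 0" "\<tau>max > 0" "\<mu> > 0" "\<mu> \<le> 1"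
    and step: "\<And>n. n \<ge> 1 \<Longrightarrow> \<exists>i::nat. \<tau> n = min (\<phi> * \<tau> (n - 1)) \<tau>max * \<mu>^i"
  shows "\<tau> n > 0" and "n \<ge> 1 \<Longrightarrow> \<tau> n \<le> \<phi> * \<tau> (n - 1)"
proof -
  show pos_n: "\<tau> n > 0" for n
  proof (induction n)
    case (Suc n)
    then show ?case
      using step[of "Suc n"] pos by auto
  qed (use \<tau>0 in simp)
  assume "n \<ge> 1"
  then obtain i where i: "\<tau> n = min (\<phi> * \<tau> (n - 1)) \<tau>max * \<mu>^i"
    using step by blast
  have "min (\<phi> * \<tau> (n - 1)) \<tau>max * \<mu>^i \<le> min (\<phi> * \<tau> (n - 1)) \<tau>max"
    using pos pos_n[of "n - 1"] by (intro mult_left_le power_le_one) auto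
  then show "\<tau> n \<le> \<phi> * \<tau> (n - 1)"
    using i by linarith
qed

lemma Prox_two_step_ineq:
  fixes g :: "'a::real_inner \<Rightarrow> ereal"
  assumes g: "proper_closed_convex g" and p: "p > 0" and t: "t > 0"
    and u: "u \<in> Prox p g (z - p *\<^sub>R G0)" and u': "u' \<in> Prox t g (z' - t *\<^sub>R G1)"
    and xs: "xs \<in> edom g" and s: "s u + G1 \<bullet> (xs - u) \<le> s xs"
  shows "t * (real_of_ereal (g u) + s u - real_of_ereal (g xs) - s xs)
    \<le> t / p * ((z - u) \<bullet> (u - u')) + (z' - u') \<bullet> (u' - xs) + t * ((G1 - G0) \<bullet> (u - u'))"
proof -
  obtain gu gu' gxs where gu: "g u = ereal gu" and gu': "g u' = ereal gu'" and gxs: "g xs = ereal gxs"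
    by (metis g u u' xs Prox_in_edom proper_closed_convex_finite)
  define v where "v = (1 / p) *\<^sub>R (z - u) - G0"
  define v' where "v' = (1 / t) *\<^sub>R (z' - u') - G1"
  have "v \<in> subdiff g u"
    using Prox_imp_subdiff[OF g p u] p by (simp add: v_def algebra_simps)
  then have "gu + v \<bullet> (u' - u) \<le> gu'"
    using subdiff_ereal_ineq gu gu' by blast
  moreover have "v' \<in> subdiff g u'"
    using Prox_imp_subdiff[OF g t u'] t by (simp add: v'_def algebra_simps)
  then have "gu' + v' \<bullet> (xs - u') \<le> gxs"
    using subdiff_ereal_ineq gu' gxs by blast
  moreover have "- (v \<bullet> (u' - u)) - v' \<bullet> (xs - u') - G1 \<bullet> (xs - u)
      = ((z - u) \<bullet> (u - u')) / p + ((z' - u') \<bullet> (u' - xs)) / t + (G1 - G0) \<bullet> (u - u')"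
    unfolding v_def v'_def
    by (simp add: inner_diff_left inner_diff_right inner_commute add_divide_distrib diff_divide_distrib)
  ultimately have "gu + s u - gxs - s xs
      \<le> ((z - u) \<bullet> (u - u')) / p + ((z' - u') \<bullet> (u' - xs)) / t + (G1 - G0) \<bullet> (u - u')"
    using s by linarith
  from mult_left_mono[OF this less_imp_le[OF t]] show ?thesis
    using t by (simp add: gu gxs distrib_left)
qed

lemma primal_descent:
  fixes g :: "'a::real_inner \<Rightarrow> ereal"
  assumes g: "proper_closed_convex g" and p: "p > 0" and t: "t > 0" and t_le: "t \<le> \<phi> * p"
    and \<psi>: "\<psi> > 1" and \<phi>: "\<phi> > 0" and \<xi>: "\<xi> > 0"
    and \<omega>: "\<omega> = 2 * \<psi> - \<xi> - \<psi>^3 * \<phi> / (1 + \<psi>)"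
    and z': "z' = ((\<psi> - 1) / \<psi>) *\<^sub>R u + (1 / \<psi>) *\<^sub>R z"
    and z'': "z'' = ((\<psi> - 1) / \<psi>) *\<^sub>R u' + (1 / \<psi>) *\<^sub>R z'"
    and u: "u \<in> Prox p g (z - p *\<^sub>R G0)" and u': "u' \<in> Prox t g (z' - t *\<^sub>R G1)"
    and xs: "xs \<in> edom g" and s: "s u + G1 \<bullet> (xs - u) \<le> s xs"
  shows "2 * t * (real_of_ereal (g u) + s u - real_of_ereal (g xs) - s xs)
    \<le> \<psi> / (\<psi> - 1) * norm (z' - xs)^2 - \<psi> / (\<psi> - 1) * norm (z'' - xs)^2
       - \<omega> * (t / p) * norm (u' - u)^2 + t * p / \<xi> * norm (G1 - G0)^2"
proof -
  define P where "P = \<psi>^3 * \<phi> / (1 + \<psi>)"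
  define \<delta> where "\<delta> = t / p"
  define a where "a = u' - z'"
  define b where "b = u - z'"
  have P: "P > 0" and \<delta>: "0 \<le> \<delta>" "\<delta> \<le> \<phi>"
    using \<psi> \<phi> p t t_le by (simp_all add: P_def \<delta>_def field_simps)
  have ab: "a - b = u' - u"
    by (simp add: a_def b_def)
  have "\<psi> *\<^sub>R z' = (\<psi> - 1) *\<^sub>R u + z"
    using \<psi> by (simp add: z' scaleR_add_right)
  then have zu: "z - u = - (\<psi> *\<^sub>R b)"
    by (simp add: b_def algebra_simps)
  have "(z - u) \<bullet> (u - u') = \<psi> * (b \<bullet> (a - b))"
    unfolding zu ab by (simp add: inner_diff_right algebra_simps)
  then have step_x: "t / p * ((z - u) \<bullet> (u - u')) = \<delta> * \<psi> * (b \<bullet> (a - b))"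
    by (simp add: \<delta>_def)
  have "((\<psi> - 1) / \<psi>) *\<^sub>R (u' - xs) + (1 / \<psi>) *\<^sub>R (z' - xs) = z'' - ((\<psi> - 1) / \<psi> + 1 / \<psi>) *\<^sub>R xs"
    by (simp add: z'' algebra_simps)
  also have "(\<psi> - 1) / \<psi> + 1 / \<psi> = 1"
    using \<psi> by (simp add: field_simps)
  finally have z''_xs: "((\<psi> - 1) / \<psi>) *\<^sub>R (u' - xs) + (1 / \<psi>) *\<^sub>R (z' - xs) = z'' - xs"
    by simp
  have step_z: "2 * ((z' - u') \<bullet> (u' - xs)) = \<psi> / (\<psi> - 1) * norm (z' - xs)^2
      - \<psi> / (\<psi> - 1) * norm (z'' - xs)^2 - (\<psi> + 1) / \<psi> * norm a ^ 2"
    using inner_relaxation_identity[OF \<psi>, where a = "u' - xs" and b = "z' - xs"]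
    unfolding z''_xs by (simp add: a_def)
  have "\<delta> * ((2 * \<psi> - P) * norm (a - b)^2 + 2 * \<psi> * (b \<bullet> (a - b))) \<le> \<delta> * (\<psi>^2 / P * norm a ^ 2)"
    using inner_quadratic_bound[OF P] \<delta>(1) by (rule mult_left_mono)
  also have "\<dots> \<le> \<phi> * (\<psi>^2 / P * norm a ^ 2)"
    using \<delta> P by (intro mult_right_mono) auto
  also have "\<dots> = (\<psi> + 1) / \<psi> * norm a ^ 2"
    using \<psi> \<phi> by (simp add: P_def field_simps power2_eq_square power3_eq_cube)
  finally have step_quad: "\<delta> * ((2 * \<psi> - P) * norm (a - b)^2) + 2 * (\<delta> * \<psi> * (b \<bullet> (a - b)))
      \<le> (\<psi> + 1) / \<psi> * norm a ^ 2"
    by (simp add: algebra_simps)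
  have "t * (2 * ((G1 - G0) \<bullet> (u - u'))) \<le> t * (p / \<xi> * norm (G1 - G0)^2 + norm (u - u')^2 / (p / \<xi>))"
    using inner_le_young[of "p / \<xi>" "G1 - G0" "u - u'"] p \<xi> t by (intro mult_left_mono) auto
  then have step_young: "2 * (t * ((G1 - G0) \<bullet> (u - u'))) \<le> t * p / \<xi> * norm (G1 - G0)^2 + \<xi> * \<delta> * norm (a - b)^2"
    by (simp add: ab \<delta>_def norm_minus_commute algebra_simps)
  have "\<omega> * \<delta> * norm (a - b)^2 = \<delta> * ((2 * \<psi> - P) * norm (a - b)^2) - \<xi> * \<delta> * norm (a - b)^2"
    by (simp add: \<omega> P_def algebra_simps)
  with Prox_two_step_ineq[OF g p t u u' xs s] step_x step_z step_quad step_young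
  show ?thesis
    unfolding ab[symmetric] \<delta>_def[symmetric] by linarith
qed

lemma dual_descent:
  fixes f :: "'a::real_inner \<Rightarrow> ereal"
  assumes f: "proper_closed_convex f" and w: "w \<in> edom f" and ws: "ws \<in> edom f"
    and y: "y \<in> subdiff f w" and y_step: "y = y0 + (\<beta> * t) *\<^sub>R (u - w)"
    and \<beta>: "\<beta> > 0" and t: "t \<ge> 0"
  shows "2 * t * (real_of_ereal (f w) - real_of_ereal (f ws) + v \<bullet> (u - w) - (u - ws) \<bullet> y)
    \<le> 1 / \<beta> * norm (y0 - v)^2 - 1 / \<beta> * norm (y - v)^2 - 1 / \<beta> * norm (y - y0)^2"
proof -
  obtain fw fws where fw: "f w = ereal fw" and fws: "f ws = ereal fws"
    by (metis f w ws proper_closed_convex_finite)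
  have "fw + y \<bullet> (ws - w) \<le> fws"
    using subdiff_ereal_ineq[OF y fw fws] by simp
  then have "2 * t * (fw - fws + v \<bullet> (u - w) - (u - ws) \<bullet> y) \<le> 2 * t * ((v - y) \<bullet> (u - w))"
    using t by (intro mult_left_mono) (auto simp: inner_diff_left inner_diff_right inner_commute)
  also have "\<dots> = 1 / \<beta> * (2 * ((v - y) \<bullet> (y - y0)))"
    using \<beta> by (simp add: y_step)
  also have "\<dots> = 1 / \<beta> * norm (y0 - v)^2 - 1 / \<beta> * norm (y - v)^2 - 1 / \<beta> * norm (y - y0)^2"
    unfolding inner_three_point by (simp add: algebra_simps)
  finally show ?thesis
    using fw fws by simp
qed

theorem lemma4p2:
  fixes f :: "'b::euclidean_space \<Rightarrow> ereal"
    and g :: "'a::euclidean_space \<Rightarrow> ereal"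
    and h :: "'a \<Rightarrow> real" and gh :: "'a \<Rightarrow> 'a" and L\<^sub>h :: real
    and H :: "'a \<Rightarrow> 'b" and H' :: "'a \<Rightarrow> 'a \<Rightarrow>\<^sub>L 'b"
    and xs :: 'a and ws :: 'b and ys :: 'b
    and \<psi> \<xi> \<phi> \<omega> \<tau>max \<nu> \<mu> \<eta> \<beta> :: real and M :: nat
    and x z :: "nat \<Rightarrow> 'a" and y w :: "nat \<Rightarrow> 'b" and \<tau> :: "nat \<Rightarrow> real"
  assumes f_pcc: "proper_closed_convex f"
    and g_pcc: "proper_closed_convex g"
    \<comment> \<open>h convex with L_h-Lipschitz gradient gh\<close>
    and h_convex: "convex_on UNIV h"
    and h_grad: "\<And>u. (h has_derivative (\<lambda>d. gh u \<bullet> d)) (at u)"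
    and h_Lip: "L\<^sub>h \<ge> 0" "\<And>u v. norm (gh u - gh v) \<le> L\<^sub>h * norm (u - v)"
    \<comment> \<open>H : dom g \<rightarrow> dom f continuously differentiable with Jacobian H'\<close>
    and H_maps: "H ` edom g \<subseteq> edom f"
    and H_deriv: "\<And>u. u \<in> edom g \<Longrightarrow> (H has_derivative blinfun_apply (H' u)) (at u within edom g)"
    and H'_cont: "continuous_on (edom g) H'"
    and H_conv: "\<And>v. v \<in> edom (fconj f) \<Longrightarrow> convex_on (edom g) (\<lambda>u. H u \<bullet> v)"
    \<comment> \<open>(A1)\<close>
    and A1: "\<exists>xa ya. xa \<in> edom g \<and> ya \<in> edom (fconj f)
               \<and> - gradxPhi gh H' xa ya \<in> subdiff g xa
               \<and> H xa \<in> subdiff (fconj f) ya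
               \<and> \<bar>g xa + ereal (Phi h H xa ya) - fconj f ya\<bar> \<noteq> \<infinity>"
    \<comment> \<open>(A2)\<close>
    and A2_conv: "\<And>v. v \<in> edom (fconj f) \<Longrightarrow> convex_on (edom g) (\<lambda>u. Phi h H u v)"
    and A2_Lip: "\<And>X Y. bounded X \<Longrightarrow> bounded Y \<Longrightarrow>
          \<exists>Lyy Lxx Lxy. Lyy \<ge> 0 \<and> Lxx \<ge> 0 \<and> Lxy > 0 \<and>
            (\<forall>u\<in>X \<inter> edom g. \<forall>u'\<in>X \<inter> edom g. \<forall>v\<in>Y \<inter> edom (fconj f). \<forall>v'\<in>Y \<inter> edom (fconj f).
               norm (H u - H u) \<le> Lyy * norm (v - v') \<and>
               norm (gradxPhi gh H' u v - gradxPhi gh H' u' v')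
                 \<le> Lxx * norm (u - u') + Lxy * norm (v - v'))"
    \<comment> \<open>(xs, ws, ys) is a point of Omega-tilde\<close>
    and fix_dom: "xs \<in> edom g" "ws \<in> edom f" "ys \<in> edom (fconj f)"
    and fix_1: "- adjoint (blinfun_apply (H' xs)) ys - gh xs \<in> subdiff g xs"
    and fix_2: "ys \<in> subdiff f ws"
    and fix_3: "H xs = ws"
    \<comment> \<open>parameters\<close>
    and psi: "1 < \<psi>" "\<psi> < 1 + sqrt 3"
    and xi: "\<xi> > 0" and phi: "\<phi> > 1"
    and omega: "\<omega> = 2 * \<psi> - \<xi> - \<psi>^3 * \<phi> / (1 + \<psi>)" "\<omega> > 0"
    and taumax: "\<tau>max > 0"
    and nu: "0 < \<nu>" "\<nu> < 1" and mu: "0 < \<mu>" "\<mu> < 1"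
    and eta: "0 \<le> \<eta>" "\<eta> < 1"
    and M: "M \<ge> 1" and beta: "\<beta> > 0"
    and x0: "x 0 \<in> edom g" and y0: "y 0 \<in> edom (fconj f)"
    and tau0: "0 < \<tau> 0" "\<tau> 0 \<le> \<tau>max"
    \<comment> \<open>iteration PDAc-L\<close>
    and z0: "z 0 = x 0"
    and z_step: "\<And>n. n \<ge> 1 \<Longrightarrow> z n = ((\<psi> - 1) / \<psi>) *\<^sub>R x (n - 1) + (1 / \<psi>) *\<^sub>R z (n - 1)"
    and x_step: "\<And>n. n \<ge> 1 \<Longrightarrow>
          x n \<in> Prox (\<tau> (n - 1)) g (z n - \<tau> (n - 1) *\<^sub>R gradxPhi gh H' (x (n - 1)) (y (n - 1)))"
    and linesearch: "\<And>n. n \<ge> 1 \<Longrightarrow>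
          \<exists>i::nat. \<tau> n = min (\<phi> * \<tau> (n - 1)) \<tau>max * \<mu>^i
            \<and> y n \<in> Prox (\<beta> * \<tau> n) (fconj f) (y (n - 1) + (\<beta> * \<tau> n) *\<^sub>R H (x n))
            \<and> ls_cond h gh H H' \<xi> \<nu> \<eta> \<omega> \<beta> M \<tau> x y n (\<tau> n) (y n)
            \<and> (\<forall>j<i. \<forall>yt. yt \<in> Prox (\<beta> * (min (\<phi> * \<tau> (n - 1)) \<tau>max * \<mu>^j)) (fconj f)
                         (y (n - 1) + (\<beta> * (min (\<phi> * \<tau> (n - 1)) \<tau>max * \<mu>^j)) *\<^sub>R H (x n))
                  \<longrightarrow> \<not> ls_cond h gh H H' \<xi> \<nu> \<eta> \<omega> \<beta> M \<tau> x y n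
                          (min (\<phi> * \<tau> (n - 1)) \<tau>max * \<mu>^j) yt)"
    and w_def: "\<And>n. n \<ge> 1 \<Longrightarrow>
          w n \<in> Prox (1 / (\<beta> * \<tau> n)) f ((1 / (\<beta> * \<tau> n)) *\<^sub>R y (n - 1) + H (x n))"
  shows "\<forall>v::'b. \<forall>n\<ge>1.
     (let F = (\<lambda>u wv. g u + ereal (h u) + f wv);
          J = (\<lambda>u wv. F u wv + ereal (v \<bullet> (H u - wv)) - F xs ws);
          a = (\<lambda>k. \<psi> / (\<psi> - 1) * norm (z (k + 1) - xs)^2 + 1 / \<beta> * norm (y (k - 1) - v)^2
                    + \<omega> * delta \<tau> (k - 1) * norm (x k - x (k - 1))^2);
          \<theta> = gradxPhi gh H' (x n) (y n) - gradxPhi gh H' (x (n - 1)) (y (n - 1));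
          Phiy = Phi h H (x n) (y (n - 1)) + H (x n) \<bullet> (y n - y (n - 1)) - Phi h H (x n) (y n);
          b = - (\<tau> n * \<tau> (n - 1) / \<xi>) * norm \<theta>^2 + 1 / \<beta> * norm (y n - y (n - 1))^2
              + \<omega> * delta \<tau> (n - 1) * norm (x n - x (n - 1))^2 - 2 * \<tau> n * Phiy
      in ereal (a (n + 1)) + ereal (2 * \<tau> n) * J (x n) (w n) \<le> ereal (a n - b))"
  \<comment> \<open>The term Phi_n^y vanishes because Phi is affine in y.\<close>
  apply (intro allI impI)
  subgoal premises n for v n
  proof -
    have step_size_rule: "\<exists>i::nat. \<tau> k = min (\<phi> * \<tau> (k - 1)) \<tau>max * \<mu>^i" if "k \<ge> 1" for k
      using linesearch[OF that] by blast
    have \<phi>: "\<phi> > 0"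
      using phi by simp
    have \<tau>: "\<tau> (n - 1) > 0" "\<tau> n > 0" "\<tau> n \<le> \<phi> * \<tau> (n - 1)"
      using backtracking_step_size[OF tau0(1) \<phi> taumax mu(1) less_imp_le[OF mu(2)] step_size_rule] n by auto
    have "y n \<in> Prox (\<beta> * \<tau> n) (fconj f) (y (n - 1) + (\<beta> * \<tau> n) *\<^sub>R H (x n))"
      using linesearch[OF n] by blast
    note moreau = Prox_fconj_eq[OF f_pcc mult_pos_pos[OF beta \<tau>(2)] w_def[OF n] this]
    note x_dom = Prox_in_edom[OF g_pcc x_step[OF n]] and w_dom = Prox_in_edom[OF f_pcc w_def[OF n]]
    obtain gx gxs fw fws where gx: "g (x n) = ereal gx" and gxs: "g xs = ereal gxs"
      and fw: "f (w n) = ereal fw" and fws: "f ws = ereal fws"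
      by (metis proper_closed_convex_finite f_pcc g_pcc x_dom w_dom fix_dom(1,2))
    have Phi_grad: "Phi h H (x n) (y n) + gradxPhi gh H' (x n) (y n) \<bullet> (xs - x n) \<le> Phi h H xs (y n)"
      using subdiff_imp_edom_fconj[OF moreau(2) fw]
      by (intro convex_on_has_derivative_ge[OF A2_conv Phi_has_derivative] h_grad H_deriv x_dom fix_dom(1))
    have "x (Suc n) \<in> Prox (\<tau> n) g (z (Suc n) - \<tau> n *\<^sub>R gradxPhi gh H' (x n) (y n))"
      "z (Suc n) = ((\<psi> - 1) / \<psi>) *\<^sub>R x n + (1 / \<psi>) *\<^sub>R z n"
      "z (Suc (Suc n)) = ((\<psi> - 1) / \<psi>) *\<^sub>R x (Suc n) + (1 / \<psi>) *\<^sub>R z (Suc n)"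
      using x_step[of "Suc n"] z_step[of "Suc n"] z_step[of "Suc (Suc n)"] by simp_all
    from primal_descent[where s = "\<lambda>u. Phi h H u (y n)", OF g_pcc \<tau> psi(1) \<phi> xi omega(1) this(2,3)
        x_step[OF n] this(1) fix_dom(1) Phi_grad]
      dual_descent[OF f_pcc w_dom fix_dom(2) moreau(2) moreau(1) beta, of v]
    show ?thesis
      using n \<tau> fix_3 gx gxs fw fws
      by (simp add: Let_def delta_def Phi_def inner_diff_left inner_diff_right ring_distribs)
  qed
  done

end
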